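(* Let $I\subseteq\overline{\mathbb R}[x_1^{\pm1},\dots,x_n^{\pm1}]$ be a tropical ideal and $a\in\mathbb R$, and let $\pi:\mathbb R^n\to\mathbb R^{n-1}$ be the projection onto the first $n-1$ coordinates. Then $V(I|_{x_n=a})\subseteq\pi(V(I)\cap\{x_n=a\})$. Moreover, if $\mathbf w\in\mathbb R^n$ with $w_n=a$ lies in a closed cell $\sigma$ of a polyhedral complex $\Sigma$ with $|\Sigma|=V(I)$ such that $\operatorname{span}(\sigma)\not\subseteq\{x_n=0\}$, then $\pi(\mathbf w)\in V(I|_{x_n=a})$. In particular, if $V(I)$ and $\{x_n=a\}$ intersect transversely at $\mathbf w$, then $\pi(\mathbf w)\in V(I|_{x_n=a})$.
   Context: $\overline{\mathbb R}=(\mathbb R\cup\{\infty\},\min,+)$. $[f]_{\mathbf x^{\mathbf u}}$ is the coefficient of $\mathbf x^{\mathbf u}$, $f(\mathbf w)=\min_{\mathbf u}([f]_{\mathbf x^{\mathbf u}}+\mathbf u\cdot\mathbf w)$. Tropical ideal: for $f,g\in I$ and $\mathbf x^{\mathbf u}$ with $[f]_{\mathbf x^{\mathbf u}}=[g]_{\mathbf x^{\mathbf u}}\ne\infty$ there is $h\in I$ with $[h]_{\mathbf x^{\mathbf u}}=\infty$ and $[h]_{\mathbf x^{\mathbf v}}\ge\min([f]_{\mathbf x^{\mathbf v}},[g]_{\mathbf x^{\mathbf v}})$ for all $\mathbf v$, with equality when $[f]_{\mathbf x^{\mathbf v}}\ne[g]_{\mathbf x^{\mathbf v}}$. $I|_{x_n=a}=\{f|_{x_n=a}:f\in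 I\}\subseteq\overline{\mathbb R}[x_1^{\pm1},\dots,x_{n-1}^{\pm1}]$. $V(K)$ is the set of points at which the minimum of every $f\in K$, $f\ne\infty$, is attained at least twice. $\operatorname{span}(\sigma)=\operatorname{span}\{\mathbf x-\mathbf y:\mathbf x,\mathbf y\in\sigma\}$. Two polyhedral complexes intersect transversely at $\mathbf w$ if $\mathbf w$ lies in the relative interiors of cells $\sigma_1,\sigma_2$ of each with $\operatorname{span}(\sigma_1)+\operatorname{span}(\sigma_2)=\mathbb R^n$. *)

theory Defs
  imports "HOL-Analysis.Analysis"
begin

text \<open>A polynomial is its coefficient function: exponent vector \<mapsto> coefficient in
  R \<union> {\<infinity>}, represented in ereal (the value -\<infinity> is excluded).
  The semiring is (min, +).\<close>

type_synonym 'i tpoly = "('i \<Rightarrow> int) \<Rightarrow> ereal"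

definition tpoly_on :: "'i set \<Rightarrow> 'i tpoly \<Rightarrow> bool" where
  "tpoly_on S f \<longleftrightarrow> (\<forall>u. f u \<noteq> -\<infinity>) \<and> finite {u. f u \<noteq> \<infinity>}
     \<and> (\<forall>u. f u \<noteq> \<infinity> \<longrightarrow> (\<forall>i. i \<notin> S \<longrightarrow> u i = 0))"

definition mono_val :: "('i::finite \<Rightarrow> int) \<Rightarrow> ('i \<Rightarrow> real) \<Rightarrow> real" where
  "mono_val u w = (\<Sum>i\<in>UNIV. real_of_int (u i) * w i)"

definition trop_eval :: "'i::finite tpoly \<Rightarrow> ('i \<Rightarrow> real) \<Rightarrow> ereal" where
  "trop_eval f w = (INF u. f u + ereal (mono_val u w))"

definition min_twice :: "'i::finite tpoly \<Rightarrow> ('i \<Rightarrow> real) \<Rightarrow> bool" where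
  "min_twice f w \<longleftrightarrow> (\<exists>u v. u \<noteq> v \<and> f u \<noteq> \<infinity> \<and> f v \<noteq> \<infinity>
      \<and> f u + ereal (mono_val u w) = trop_eval f w
      \<and> f v + ereal (mono_val v w) = trop_eval f w)"

text \<open>V(K) for polynomials in the variables indexed by S; points of R^S are
  represented as functions vanishing outside S.\<close>
definition trop_variety :: "'i::finite set \<Rightarrow> 'i tpoly set \<Rightarrow> ('i \<Rightarrow> real) set" where
  "trop_variety S K = {w. (\<forall>i. i \<notin> S \<longrightarrow> w i = 0)
      \<and> (\<forall>f\<in>K. f \<noteq> (\<lambda>_. \<infinity>) \<longrightarrow> min_twice f w)}"

text \<open>Tropical ideal in the Laurent semiring R[x_i^{\<plusminus>1} : i \<in> 'i]:
  an ideal (contains \<infinity>, closed under tropical sum, closed under tropical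
  multiplication by monomials c x^m -- together equivalent to closure under
  multiplication by arbitrary polynomials) satisfying the elimination axiom.\<close>
definition tropical_ideal :: "'i::finite tpoly set \<Rightarrow> bool" where
  "tropical_ideal I \<longleftrightarrow>
     (\<forall>f\<in>I. tpoly_on UNIV f) \<and> (\<lambda>_. \<infinity>) \<in> I
     \<and> (\<forall>f\<in>I. \<forall>g\<in>I. (\<lambda>u. min (f u) (g u)) \<in> I)
     \<and> (\<forall>f\<in>I. \<forall>c::real. \<forall>m. (\<lambda>u. ereal c + f (u - m)) \<in> I)
     \<and> (\<forall>f\<in>I. \<forall>g\<in>I. \<forall>u. f u = g u \<and> f u \<noteq> \<infinity> \<longrightarrow>
          (\<exists>h\<in>I. h u = \<infinity> \<and> (\<forall>v. h v \<ge> min (f v) (g v)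
                 \<and> (f v \<noteq> g v \<longrightarrow> h v = min (f v) (g v)))))"

definition restrict_at :: "'i \<Rightarrow> real \<Rightarrow> 'i tpoly \<Rightarrow> 'i tpoly" where
  "restrict_at l a f = (\<lambda>u. if u l = 0
      then (INF k::int. f (u(l := k)) + ereal (real_of_int k * a)) else \<infinity>)"

definition tvar :: "'n::finite tpoly set \<Rightarrow> (real^'n) set" where
  "tvar I = {w. vec_nth w \<in> trop_variety UNIV I}"

text \<open>Projection forgetting coordinate l (R^{n-1} identified with functions vanishing at l).\<close>
definition proj_out :: "'n \<Rightarrow> real^'n \<Rightarrow> ('n \<Rightarrow> real)" where
  "proj_out l w = (\<lambda>i. if i = l then 0 else w $ i)"

definition polyhedral_complex :: "('a::euclidean_space) set set \<Rightarrow> bool" where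
  "polyhedral_complex \<Sigma> \<longleftrightarrow> finite \<Sigma> \<and> (\<forall>\<sigma>\<in>\<Sigma>. polyhedron \<sigma>)
     \<and> (\<forall>\<sigma>\<in>\<Sigma>. \<forall>\<tau>. \<tau> face_of \<sigma> \<and> \<tau> \<noteq> {} \<longrightarrow> \<tau> \<in> \<Sigma>)
     \<and> (\<forall>\<sigma>\<in>\<Sigma>. \<forall>\<tau>\<in>\<Sigma>. \<sigma> \<inter> \<tau> = {} \<or> (\<sigma> \<inter> \<tau> face_of \<sigma> \<and> \<sigma> \<inter> \<tau> face_of \<tau>))"

definition span_diff :: "('a::real_vector) set \<Rightarrow> 'a set" where
  "span_diff \<sigma> = span {x - y | x y. x \<in> \<sigma> \<and> y \<in> \<sigma>}"

definition transverse_at :: "('a::euclidean_space) set set \<Rightarrow> 'a set set \<Rightarrow> 'a \<Rightarrow> bool" where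
  "transverse_at \<Sigma>1 \<Sigma>2 w \<longleftrightarrow> (\<exists>\<sigma>1\<in>\<Sigma>1. \<exists>\<sigma>2\<in>\<Sigma>2. w \<in> rel_interior \<sigma>1 \<and> w \<in> rel_interior \<sigma>2
      \<and> {x + y | x y. x \<in> span_diff \<sigma>1 \<and> y \<in> span_diff \<sigma>2} = UNIV)"

end

theory Submission
  imports Defs
begin

(* Along the hyperplane x_l = a the restriction f|_{x_l=a} has the same tropical value at w'
   as f at the lift (w', a), and every term of the restriction is realised by a term of f.
   Hence two minimising terms of the restriction lift to two minimising terms of f, which
   gives the first inclusion.
   Conversely, if w lies in a convex cell of V(I) containing a point y with y_l <> a, then
   every polynomial attains its minimum twice at w + t (y - w) for all t in (0, 1].  Since
   the support is finite, one pair of terms u <> v is minimising for arbitrarily small t;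
   letting t -> 0 shows that u and v both minimise at w and have the same slope along
   y - w.  As y_l - w_l <> 0, they cannot differ only in their x_l exponent, so they project
   to two distinct minimising terms of the restriction. *)

lemma affine_min_twice_limit:
  fixes \<alpha> \<beta> :: "'a \<Rightarrow> real"
  assumes "finite S"
    and min2: "\<forall>t\<in>{0<..1}. \<exists>u\<in>S. \<exists>v\<in>S. u \<noteq> v \<and> \<alpha> u + t * \<beta> u = \<alpha> v + t * \<beta> v
                 \<and> (\<forall>z\<in>S. \<alpha> u + t * \<beta> u \<le> \<alpha> z + t * \<beta> z)"
  shows "\<exists>u\<in>S. \<exists>v\<in>S. u \<noteq> v \<and> \<alpha> u = \<alpha> v \<and> \<beta> u = \<beta> v \<and> (\<forall>z\<in>S. \<alpha> u \<le> \<alpha> z)"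
proof -
  define t where "t n = 1 / real (Suc n)" for n
  define R where "R n = (\<lambda>(u, v). u \<noteq> v \<and> \<alpha> u + t n * \<beta> u = \<alpha> v + t n * \<beta> v
      \<and> (\<forall>z\<in>S. \<alpha> u + t n * \<beta> u \<le> \<alpha> z + t n * \<beta> z))" for n
  have "\<forall>n\<in>UNIV. \<exists>p\<in>S \<times> S. R n p"
  proof
    fix n
    have "t n \<in> {0<..1}"
      by (simp add: t_def)
    with min2 have "\<exists>u\<in>S. \<exists>v\<in>S. R n (u, v)"
      unfolding R_def case_prod_conv by (rule bspec)
    then show "\<exists>p\<in>S \<times> S. R n p"
      by blast
  qed
  moreover have "finite (S \<times> S)"
    using \<open>finite S\<close> by simp
  ultimately have "\<exists>p\<in>S \<times> S. infinite {n \<in> UNIV. R n p}"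
    by (intro pigeonhole_infinite_rel[OF infinite_UNIV_nat])
  then obtain u v where uv: "u \<in> S" "v \<in> S" and "infinite {n. R n (u, v)}"
    by auto
  then obtain r :: "nat \<Rightarrow> nat" where "strict_mono r" and "\<And>k. R (r k) (u, v)"
    using infinite_enumerate by blast
  then have R: "u \<noteq> v" "\<alpha> u + t (r k) * \<beta> u = \<alpha> v + t (r k) * \<beta> v"
      "\<And>z. z \<in> S \<Longrightarrow> \<alpha> u + t (r k) * \<beta> u \<le> \<alpha> z + t (r k) * \<beta> z" for k
    unfolding R_def case_prod_conv by blast+
  have "(\<lambda>k. t (r k)) \<longlonglongrightarrow> 0"
    using LIMSEQ_subseq_LIMSEQ[OF LIMSEQ_inverse_real_of_nat \<open>strict_mono r\<close>]
    by (simp add: t_def o_def inverse_eq_divide)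
  then have lim: "(\<lambda>k. \<alpha> z + t (r k) * \<beta> z) \<longlonglongrightarrow> \<alpha> z" for z
    using tendsto_add[OF tendsto_const[of "\<alpha> z"] tendsto_mult_left_zero[of _ _ "\<beta> z"]] by simp
  have "\<alpha> u \<le> \<alpha> z" if "z \<in> S" for z
    by (rule LIMSEQ_le[OF lim lim]) (use R(3) that in blast)
  moreover have "\<alpha> u = \<alpha> v"
    using lim[of v] unfolding R(2)[symmetric] by (rule LIMSEQ_unique[OF lim])
  moreover have "\<beta> u = \<beta> v"
    using R(2)[of 0] \<open>\<alpha> u = \<alpha> v\<close> by (simp add: t_def)
  ultimately show ?thesis
    using uv R(1) by blast
qed

lemma INF_attained_of_finite_non_top:
  fixes F :: "'a \<Rightarrow> 'b::complete_linorder"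
  assumes "finite {k. F k \<noteq> top}"
  shows "\<exists>k. (INF k. F k) = F k"
proof (cases "{k. F k \<noteq> top} = {}")
  case True
  then show ?thesis by simp
next
  case False
  define A where "A = {k. F k \<noteq> top}"
  have "Min (F ` A) \<in> F ` A"
    using assms False by (intro Min_in) (auto simp: A_def)
  then obtain k where "k \<in> A" "F k = Min (F ` A)"
    by (metis imageE)
  then have "F k \<le> F j" for j
    using assms by (cases "j \<in> A") (auto simp: A_def)
  then have "(INF j. F j) = F k"
    by (metis INF_lower2 INF_greatest UNIV_I antisym)
  then show ?thesis ..
qed

lemma trop_eval_le: "trop_eval f w \<le> f u + ereal (mono_val u w)"
  unfolding trop_eval_def by (rule INF_lower) simp

lemma term_eq_trop_eval_iff:
  "f u + ereal (mono_val u w) = trop_eval f w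
     \<longleftrightarrow> (\<forall>z. f u + ereal (mono_val u w) \<le> f z + ereal (mono_val z w))"
proof
  assume "\<forall>z. f u + ereal (mono_val u w) \<le> f z + ereal (mono_val z w)"
  then have "f u + ereal (mono_val u w) \<le> trop_eval f w"
    unfolding trop_eval_def by (blast intro: INF_greatest)
  then show "f u + ereal (mono_val u w) = trop_eval f w"
    using trop_eval_le antisym by blast
qed (metis trop_eval_le)

lemma mono_val_fun_upd:
  "mono_val z W = mono_val (z(l := 0)) (W(l := 0)) + real_of_int (z l) * W l"
proof -
  have "mono_val z W = (\<Sum>i\<in>UNIV. real_of_int ((z(l := 0)) i) * (W(l := 0)) i
      + (if i = l then real_of_int (z l) * W l else 0))"
    unfolding mono_val_def by (intro sum.cong) auto
  then show ?thesis
    by (simp add: sum.distrib mono_val_def)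
qed

lemma mono_val_add_scaled:
  "mono_val z (\<lambda>i. W i + t * D i) = mono_val z W + t * mono_val z D"
  by (simp add: mono_val_def algebra_simps sum.distrib sum_distrib_left)

lemma restrict_at_top: "restrict_at l a (\<lambda>_. \<infinity>) = (\<lambda>_. \<infinity>)"
  by (auto simp: restrict_at_def fun_eq_iff)

lemma restrict_at_term_le:
  "restrict_at l (W l) f (z(l := 0)) + ereal (mono_val (z(l := 0)) (W(l := 0)))
     \<le> f z + ereal (mono_val z W)"
proof -
  let ?m = "mono_val (z(l := 0)) (W(l := 0))"
  have "restrict_at l (W l) f (z(l := 0)) \<le> f z + ereal (real_of_int (z l) * W l)"
    unfolding restrict_at_def by (simp add: INF_lower2[of "z l"])
  then have "restrict_at l (W l) f (z(l := 0)) + ereal ?m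
      \<le> f z + ereal (real_of_int (z l) * W l) + ereal ?m"
    by (rule add_right_mono)
  also have "\<dots> = f z + ereal (mono_val z W)"
    using mono_val_fun_upd[of z W l] by (cases "f z") (simp_all add: algebra_simps)
  finally show ?thesis .
qed

lemma restrict_at_term_attained:
  assumes "finite {u. f u \<noteq> \<infinity>}" and "restrict_at l (W l) f u \<noteq> \<infinity>"
  shows "\<exists>z. z(l := 0) = u \<and> f z \<noteq> \<infinity>
     \<and> restrict_at l (W l) f u + ereal (mono_val u (W(l := 0))) = f z + ereal (mono_val z W)"
proof -
  have "u l = 0"
    using assms(2) by (auto simp: restrict_at_def split: if_splits)
  define F where "F k = f (u(l := k)) + ereal (real_of_int k * W l)" for k
  have "{k. F k \<noteq> top} \<subseteq> (\<lambda>z. z l) ` {u. f u \<noteq> \<infinity>}"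
  proof
    fix k
    assume "k \<in> {k. F k \<noteq> top}"
    then have "f (u(l := k)) \<noteq> \<infinity>"
      by (auto simp: F_def top_ereal_def)
    then show "k \<in> (\<lambda>z. z l) ` {u. f u \<noteq> \<infinity>}"
      by (intro image_eqI[of _ _ "u(l := k)"]) simp_all
  qed
  then obtain k where k: "(INF k. F k) = F k"
    using INF_attained_of_finite_non_top finite_surj[OF assms(1)] by blast
  define z where "z = u(l := k)"
  have "restrict_at l (W l) f u = F k"
    using \<open>u l = 0\<close> k by (simp add: restrict_at_def F_def)
  moreover have "z(l := 0) = u"
    using \<open>u l = 0\<close> by (auto simp: z_def)
  moreover have "F k + ereal (mono_val u (W(l := 0))) = f z + ereal (mono_val z W)"
    using mono_val_fun_upd[of z W l] \<open>z(l := 0) = u\<close>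
    by (cases "f z") (simp_all add: F_def z_def algebra_simps)
  moreover have "f z \<noteq> \<infinity>"
    using assms(2) calculation(1) by (auto simp: F_def z_def)
  ultimately show ?thesis
    by auto
qed

lemma trop_eval_restrict_at:
  "trop_eval (restrict_at l (W l) f) (W(l := 0)) = trop_eval f W"
proof (rule antisym)
  let ?g = "restrict_at l (W l) f"
  show "trop_eval ?g (W(l := 0)) \<le> trop_eval f W"
    unfolding trop_eval_def[of f]
  proof (rule INF_greatest)
    fix z
    show "trop_eval ?g (W(l := 0)) \<le> f z + ereal (mono_val z W)"
      using trop_eval_le restrict_at_term_le by (rule order_trans)
  qed
  show "trop_eval f W \<le> trop_eval ?g (W(l := 0))"
    unfolding trop_eval_def[of ?g]
  proof (rule INF_greatest)
    fix u
    let ?m = "mono_val u (W(l := 0))"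
    show "trop_eval f W \<le> ?g u + ereal ?m"
    proof (cases "u l = 0")
      case True
      have "trop_eval f W - ereal ?m \<le> f (u(l := k)) + ereal (real_of_int k * W l)" for k
      proof -
        have "(u(l := k))(l := 0) = u"
          using True by auto
        then have "mono_val (u(l := k)) W = ?m + real_of_int k * W l"
          using mono_val_fun_upd[of "u(l := k)" W l] by simp
        then have "trop_eval f W \<le> f (u(l := k)) + ereal (real_of_int k * W l) + ereal ?m"
          using trop_eval_le[of f W "u(l := k)"]
          by (cases "f (u(l := k))") (simp_all add: algebra_simps)
        then show ?thesis
          by (simp add: ereal_minus_le)
      qed
      then have "trop_eval f W - ereal ?m \<le> ?g u"
        using True unfolding restrict_at_def by (simp add: INF_greatest)
      then show ?thesis
        by (simp add: ereal_minus_le)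
    qed (simp add: restrict_at_def)
  qed
qed

lemma min_twice_of_restrict_at:
  assumes "finite {u. f u \<noteq> \<infinity>}" and "min_twice (restrict_at l (W l) f) (W(l := 0))"
  shows "min_twice f W"
proof -
  let ?g = "restrict_at l (W l) f"
  have lift: "\<exists>z. z(l := 0) = u \<and> f z \<noteq> \<infinity> \<and> f z + ereal (mono_val z W) = trop_eval f W"
    if "?g u \<noteq> \<infinity>" "?g u + ereal (mono_val u (W(l := 0))) = trop_eval ?g (W(l := 0))" for u
    using restrict_at_term_attained[where l=l and W=W, OF assms(1) that(1)] that(2)
    unfolding trop_eval_restrict_at by metis
  obtain u v where uv: "u \<noteq> v" "?g u \<noteq> \<infinity>" "?g v \<noteq> \<infinity>"
    "?g u + ereal (mono_val u (W(l := 0))) = trop_eval ?g (W(l := 0))"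
    "?g v + ereal (mono_val v (W(l := 0))) = trop_eval ?g (W(l := 0))"
    using assms(2) unfolding min_twice_def by blast
  obtain U where U: "U(l := 0) = u" "f U \<noteq> \<infinity>" "f U + ereal (mono_val U W) = trop_eval f W"
    using lift[OF uv(2,4)] by blast
  obtain V where V: "V(l := 0) = v" "f V \<noteq> \<infinity>" "f V + ereal (mono_val V W) = trop_eval f W"
    using lift[OF uv(3,5)] by blast
  have "U \<noteq> V"
    using U(1) V(1) uv(1) by auto
  with U(2,3) V(2,3) show ?thesis
    unfolding min_twice_def by blast
qed

lemma min_twice_restrict_atI:
  assumes "u(l := 0) \<noteq> v(l := 0)" and "f u \<noteq> \<infinity>" "f v \<noteq> \<infinity>"
    and "f u + ereal (mono_val u W) = trop_eval f W" "f v + ereal (mono_val v W) = trop_eval f W"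
  shows "min_twice (restrict_at l (W l) f) (W(l := 0))"
proof -
  let ?g = "restrict_at l (W l) f"
  have descend: "?g (z(l := 0)) \<noteq> \<infinity>
      \<and> ?g (z(l := 0)) + ereal (mono_val (z(l := 0)) (W(l := 0))) = trop_eval ?g (W(l := 0))"
    if "f z \<noteq> \<infinity>" "f z + ereal (mono_val z W) = trop_eval f W" for z
  proof
    have le: "?g (z(l := 0)) + ereal (mono_val (z(l := 0)) (W(l := 0))) \<le> f z + ereal (mono_val z W)"
      by (rule restrict_at_term_le)
    then show "?g (z(l := 0)) \<noteq> \<infinity>"
      using that(1) by (cases "f z") auto
    from le have "?g (z(l := 0)) + ereal (mono_val (z(l := 0)) (W(l := 0))) \<le> trop_eval ?g (W(l := 0))"
      unfolding that(2) trop_eval_restrict_at .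
    then show "?g (z(l := 0)) + ereal (mono_val (z(l := 0)) (W(l := 0))) = trop_eval ?g (W(l := 0))"
      using trop_eval_le by (rule antisym)
  qed
  show ?thesis
    unfolding min_twice_def using assms descend by blast
qed

lemma term_eq_trop_eval_iff_real:
  assumes "tpoly_on UNIV f" and "f u \<noteq> \<infinity>"
  shows "f u + ereal (mono_val u w) = trop_eval f w \<longleftrightarrow> (\<forall>z. f z \<noteq> \<infinity> \<longrightarrow>
    real_of_ereal (f u) + mono_val u w \<le> real_of_ereal (f z) + mono_val z w)"
proof -
  have real: "f z + ereal (mono_val z w) = ereal (real_of_ereal (f z) + mono_val z w)"
    if "f z \<noteq> \<infinity>" for z
  proof -
    have "f z \<noteq> -\<infinity>"
      using assms(1) by (simp add: tpoly_on_def)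
    with that show ?thesis
      by (cases "f z") simp_all
  qed
  have "f u + ereal (mono_val u w) \<le> f z + ereal (mono_val z w) \<longleftrightarrow> (f z \<noteq> \<infinity> \<longrightarrow>
      real_of_ereal (f u) + mono_val u w \<le> real_of_ereal (f z) + mono_val z w)" for z
    by (cases "f z = \<infinity>") (simp_all add: real assms(2))
  then show ?thesis
    by (simp add: term_eq_trop_eval_iff)
qed

lemma min_twice_segment_limit:
  assumes "tpoly_on UNIV f" and "\<forall>t\<in>{0<..1}. min_twice f (\<lambda>i. W i + t * D i)"
  shows "\<exists>u v. u \<noteq> v \<and> f u \<noteq> \<infinity> \<and> f v \<noteq> \<infinity>
    \<and> f u + ereal (mono_val u W) = trop_eval f W \<and> f v + ereal (mono_val v W) = trop_eval f W
    \<and> mono_val u D = mono_val v D"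
proof -
  define S where "S = {u. f u \<noteq> \<infinity>}"
  define \<alpha> where "\<alpha> z = real_of_ereal (f z) + mono_val z W" for z
  define \<beta> where "\<beta> z = mono_val z D" for z
  have "finite S"
    using assms(1) by (simp add: tpoly_on_def S_def)
  have "\<exists>u\<in>S. \<exists>v\<in>S. u \<noteq> v \<and> \<alpha> u + t * \<beta> u = \<alpha> v + t * \<beta> v
      \<and> (\<forall>z\<in>S. \<alpha> u + t * \<beta> u \<le> \<alpha> z + t * \<beta> z)" if "t \<in> {0<..1}" for t
  proof -
    let ?Wt = "\<lambda>i. W i + t * D i"
    have min_at: "\<forall>z\<in>S. \<alpha> x + t * \<beta> x \<le> \<alpha> z + t * \<beta> z"
      if "f x \<noteq> \<infinity>" "f x + ereal (mono_val x ?Wt) = trop_eval f ?Wt" for x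
    proof -
      from that(2) have "\<forall>z. f z \<noteq> \<infinity> \<longrightarrow>
          real_of_ereal (f x) + mono_val x ?Wt \<le> real_of_ereal (f z) + mono_val z ?Wt"
        unfolding term_eq_trop_eval_iff_real[OF assms(1) that(1)] .
      then show ?thesis
        by (simp add: S_def \<alpha>_def \<beta>_def mono_val_add_scaled add.assoc)
    qed
    have "min_twice f ?Wt"
      using assms(2) that by blast
    then obtain u v where "u \<noteq> v" "f u \<noteq> \<infinity>" "f v \<noteq> \<infinity>"
      and "f u + ereal (mono_val u ?Wt) = trop_eval f ?Wt"
      and "f v + ereal (mono_val v ?Wt) = trop_eval f ?Wt"
      unfolding min_twice_def by blast
    then have "u \<in> S" "v \<in> S"
      and min_u: "\<forall>z\<in>S. \<alpha> u + t * \<beta> u \<le> \<alpha> z + t * \<beta> z"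
      and min_v: "\<forall>z\<in>S. \<alpha> v + t * \<beta> v \<le> \<alpha> z + t * \<beta> z"
      using min_at by (simp_all add: S_def)
    moreover have "\<alpha> u + t * \<beta> u = \<alpha> v + t * \<beta> v"
      using min_u min_v \<open>u \<in> S\<close> \<open>v \<in> S\<close> by (meson order.antisym)
    ultimately show ?thesis
      using \<open>u \<noteq> v\<close> by blast
  qed
  then have "\<exists>u\<in>S. \<exists>v\<in>S. u \<noteq> v \<and> \<alpha> u = \<alpha> v \<and> \<beta> u = \<beta> v \<and> (\<forall>z\<in>S. \<alpha> u \<le> \<alpha> z)"
    by (intro affine_min_twice_limit[OF \<open>finite S\<close>] ballI)
  then obtain u v where uv: "f u \<noteq> \<infinity>" "f v \<noteq> \<infinity>" "u \<noteq> v" "\<alpha> u = \<alpha> v" "\<beta> u = \<beta> v"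
    and min: "\<forall>z. f z \<noteq> \<infinity> \<longrightarrow> \<alpha> u \<le> \<alpha> z"
    unfolding S_def by blast
  have "f u + ereal (mono_val u W) = trop_eval f W"
    unfolding term_eq_trop_eval_iff_real[OF assms(1) uv(1)] using min by (simp add: \<alpha>_def)
  moreover have "f v + ereal (mono_val v W) = trop_eval f W"
    unfolding term_eq_trop_eval_iff_real[OF assms(1) uv(2)] using min uv(4) by (simp add: \<alpha>_def)
  ultimately show ?thesis
    using uv unfolding \<beta>_def by blast
qed

lemma min_twice_restrict_at_of_segment:
  assumes "tpoly_on UNIV f" and "D l \<noteq> 0" and "\<forall>t\<in>{0<..1}. min_twice f (\<lambda>i. W i + t * D i)"
  shows "min_twice (restrict_at l (W l) f) (W(l := 0))"
proof -
  obtain u v where uv: "u \<noteq> v" "f u \<noteq> \<infinity>" "f v \<noteq> \<infinity>"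
    "f u + ereal (mono_val u W) = trop_eval f W" "f v + ereal (mono_val v W) = trop_eval f W"
    and slope: "mono_val u D = mono_val v D"
    using min_twice_segment_limit[OF assms(1,3)] by blast
  have "u(l := 0) \<noteq> v(l := 0)"
  proof
    assume same: "u(l := 0) = v(l := 0)"
    then have "u l \<noteq> v l"
      using \<open>u \<noteq> v\<close> by (metis fun_upd_triv fun_upd_upd)
    moreover have "mono_val u D - mono_val v D = real_of_int (u l - v l) * D l"
      using mono_val_fun_upd[of u D l] mono_val_fun_upd[of v D l] same
      by (simp add: algebra_simps)
    ultimately show False
      using slope assms(2) by simp
  qed
  then show ?thesis
    using min_twice_restrict_atI uv by blast
qed

lemma restricted_variety_subset_proj_out:
  fixes K :: "'n::finite tpoly set"
  assumes "\<forall>f\<in>K. finite {u. f u \<noteq> \<infinity>}"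
  shows "trop_variety (- {l}) (restrict_at l a ` K) \<subseteq> proj_out l ` (tvar K \<inter> {x. x $ l = a})"
proof
  fix w'
  assume w': "w' \<in> trop_variety (- {l}) (restrict_at l a ` K)"
  define W where "W = w'(l := a)"
  have "w' l = 0"
    using w' by (simp add: trop_variety_def)
  then have W: "W l = a" "W(l := 0) = w'"
    by (auto simp: W_def)
  have "min_twice f W" if fK: "f \<in> K" and nontriv: "f \<noteq> (\<lambda>_. \<infinity>)" for f
  proof (rule min_twice_of_restrict_at[where l = l])
    show "finite {u. f u \<noteq> \<infinity>}"
      using assms fK by blast
    obtain u where "f u \<noteq> \<infinity>"
      using nontriv by auto
    then have "restrict_at l (W l) f (u(l := 0)) \<noteq> \<infinity>"
      using restrict_at_term_le[of l W f u] by (cases "f u") auto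
    then have "restrict_at l a f \<noteq> (\<lambda>_. \<infinity>)"
      using W(1) by force
    then show "min_twice (restrict_at l (W l) f) (W(l := 0))"
      using w' fK W by (simp add: trop_variety_def)
  qed
  moreover have "vec_nth (vec_lambda W) = W"
    by (simp add: fun_eq_iff)
  ultimately have "vec_lambda W \<in> tvar K \<inter> {x. x $ l = a}"
    by (simp add: tvar_def trop_variety_def W(1))
  moreover have "proj_out l (vec_lambda W) = w'"
    using \<open>w' l = 0\<close> by (auto simp: proj_out_def W_def)
  ultimately show "w' \<in> proj_out l ` (tvar K \<inter> {x. x $ l = a})"
    by (metis image_eqI)
qed

lemma proj_out_in_restricted_variety_of_segment:
  fixes K :: "'n::finite tpoly set" and w y :: "real^'n"
  assumes "\<forall>f\<in>K. tpoly_on UNIV f"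
    and "w $ l = a" "y $ l \<noteq> a" and "closed_segment w y \<subseteq> tvar K"
  shows "proj_out l w \<in> trop_variety (- {l}) (restrict_at l a ` K)"
proof -
  define W where "W = vec_nth w"
  define D where "D = vec_nth (y - w)"
  have segment: "min_twice f (\<lambda>i. W i + t * D i)"
    if "f \<in> K" "f \<noteq> (\<lambda>_. \<infinity>)" "t \<in> {0<..1}" for f t
  proof -
    have "(1 - t) *\<^sub>R w + t *\<^sub>R y \<in> closed_segment w y"
      using that(3) unfolding closed_segment_def by (intro CollectI exI[of _ t]) simp
    then have "(1 - t) *\<^sub>R w + t *\<^sub>R y \<in> tvar K"
      using assms(4) by blast
    moreover have "vec_nth ((1 - t) *\<^sub>R w + t *\<^sub>R y) = (\<lambda>i. W i + t * D i)"
      by (auto simp: W_def D_def algebra_simps)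
    ultimately show ?thesis
      using that(1,2) by (auto simp: tvar_def trop_variety_def)
  qed
  have W: "W l = a" "W(l := 0) = proj_out l w" and "D l \<noteq> 0"
    using assms(2,3) by (auto simp: W_def D_def proj_out_def)
  have "min_twice g (proj_out l w)"
    if gK: "g \<in> restrict_at l a ` K" and nontriv: "g \<noteq> (\<lambda>_. \<infinity>)" for g
  proof -
    obtain f where f: "f \<in> K" "g = restrict_at l a f"
      using gK by blast
    then have "f \<noteq> (\<lambda>_. \<infinity>)"
      using nontriv restrict_at_top by metis
    then have "min_twice (restrict_at l (W l) f) (W(l := 0))"
      using min_twice_restrict_at_of_segment assms(1) f(1) \<open>D l \<noteq> 0\<close> segment by blast
    then show ?thesis
      unfolding f(2) W .
  qed
  then show ?thesis
    by (simp add: trop_variety_def proj_out_def)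
qed

lemma span_diff_subset_hyperplane:
  fixes \<sigma> :: "(real^'n) set"
  assumes "\<forall>x\<in>\<sigma>. x $ l = c"
  shows "span_diff \<sigma> \<subseteq> {x. x $ l = 0}"
  unfolding span_diff_def
proof (rule span_minimal)
  show "{x - y |x y. x \<in> \<sigma> \<and> y \<in> \<sigma>} \<subseteq> {x. x $ l = 0}"
    using assms by auto
  show "subspace {x :: real^'n. x $ l = 0}"
    by (auto simp: subspace_def)
qed

lemma proj_out_in_restricted_variety_of_cell:
  fixes K :: "'n::finite tpoly set" and \<sigma> :: "(real^'n) set"
  assumes "\<forall>f\<in>K. tpoly_on UNIV f" and "convex \<sigma>" "\<sigma> \<subseteq> tvar K"
    and "w \<in> \<sigma>" "w $ l = a" and "\<not> span_diff \<sigma> \<subseteq> {x. x $ l = 0}"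
  shows "proj_out l w \<in> trop_variety (- {l}) (restrict_at l a ` K)"
proof -
  obtain y where "y \<in> \<sigma>" "y $ l \<noteq> a"
    using assms(6) span_diff_subset_hyperplane[of \<sigma> l a] by blast
  then have "closed_segment w y \<subseteq> tvar K"
    using assms(2-4) closed_segment_subset by blast
  with assms(1,5) \<open>y $ l \<noteq> a\<close> show ?thesis
    by (rule proj_out_in_restricted_variety_of_segment)
qed

lemma transverse_at_hyperplane:
  fixes \<Sigma> \<Delta> :: "(real^'n) set set"
  assumes "transverse_at \<Sigma> \<Delta> w" and "\<Union>\<Delta> = {x. x $ l = a}"
  shows "\<exists>\<sigma>\<in>\<Sigma>. w \<in> \<sigma> \<and> w $ l = a \<and> \<not> span_diff \<sigma> \<subseteq> {x. x $ l = 0}"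
proof -
  obtain \<sigma>1 \<sigma>2 where "\<sigma>1 \<in> \<Sigma>" "\<sigma>2 \<in> \<Delta>" "w \<in> rel_interior \<sigma>1" "w \<in> rel_interior \<sigma>2"
    and sum: "{x + y |x y. x \<in> span_diff \<sigma>1 \<and> y \<in> span_diff \<sigma>2} = UNIV"
    using assms(1) unfolding transverse_at_def by blast
  then have "w \<in> \<sigma>1" "w \<in> \<sigma>2"
    using rel_interior_subset by blast+
  have "\<forall>x\<in>\<sigma>2. x $ l = a"
    using assms(2) \<open>\<sigma>2 \<in> \<Delta>\<close> by blast
  then have "w $ l = a" and span2: "span_diff \<sigma>2 \<subseteq> {x. x $ l = 0}"
    using \<open>w \<in> \<sigma>2\<close> span_diff_subset_hyperplane by blast+
  have "\<not> span_diff \<sigma>1 \<subseteq> {x. x $ l = 0}"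
  proof
    assume span1: "span_diff \<sigma>1 \<subseteq> {x. x $ l = 0}"
    have "axis l 1 \<in> {x + y |x y. x \<in> span_diff \<sigma>1 \<and> y \<in> span_diff \<sigma>2}"
      unfolding sum ..
    then obtain x y where "axis l 1 = x + y" "x \<in> span_diff \<sigma>1" "y \<in> span_diff \<sigma>2"
      by blast
    moreover have "x $ l = 0" "y $ l = 0"
      using calculation(2,3) span1 span2 by blast+
    ultimately have "(axis l 1 :: real^'n) $ l = 0"
      by simp
    then show False
      by simp
  qed
  with \<open>\<sigma>1 \<in> \<Sigma>\<close> \<open>w \<in> \<sigma>1\<close> \<open>w $ l = a\<close> show ?thesis
    by blast
qed

theorem proposition3p9:
  fixes I :: "('n::finite) tpoly set" and l :: 'n and a :: real
  assumes "tropical_ideal I"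
  shows "trop_variety (- {l}) (restrict_at l a ` I) \<subseteq> proj_out l ` (tvar I \<inter> {x. x $ l = a})
    \<and> (\<forall>w \<Sigma> \<sigma>. w $ l = a \<and> polyhedral_complex \<Sigma> \<and> \<Union>\<Sigma> = tvar I \<and> \<sigma> \<in> \<Sigma>
           \<and> w \<in> \<sigma> \<and> \<not> span_diff \<sigma> \<subseteq> {x. x $ l = 0}
           \<longrightarrow> proj_out l w \<in> trop_variety (- {l}) (restrict_at l a ` I))
    \<and> (\<forall>w. (\<exists>\<Sigma> \<Delta>. polyhedral_complex \<Sigma> \<and> \<Union>\<Sigma> = tvar I
                 \<and> polyhedral_complex \<Delta> \<and> \<Union>\<Delta> = {x. x $ l = a} \<and> transverse_at \<Sigma> \<Delta> w)
           \<longrightarrow> proj_out l w \<in> trop_variety (- {l}) (restrict_at l a ` I))"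
proof -
  have polys: "\<forall>f\<in>I. tpoly_on UNIV f"
    using assms by (simp add: tropical_ideal_def)
  then have "\<forall>f\<in>I. finite {u. f u \<noteq> \<infinity>}"
    by (simp add: tpoly_on_def)
  note inclusion = restricted_variety_subset_proj_out[OF this]
  have cell: "proj_out l w \<in> trop_variety (- {l}) (restrict_at l a ` I)"
    if "w $ l = a" "polyhedral_complex \<Sigma>" "\<Union>\<Sigma> = tvar I" "\<sigma> \<in> \<Sigma>" "w \<in> \<sigma>"
      "\<not> span_diff \<sigma> \<subseteq> {x. x $ l = 0}" for w :: "real^'n" and \<Sigma> \<sigma>
  proof (rule proj_out_in_restricted_variety_of_cell[OF polys])
    show "convex \<sigma>"
      using that(2,4) polyhedron_imp_convex by (auto simp: polyhedral_complex_def)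
  qed (use that in auto)
  have transverse: "proj_out l w \<in> trop_variety (- {l}) (restrict_at l a ` I)"
    if complex: "polyhedral_complex \<Sigma>" "\<Union>\<Sigma> = tvar I"
      and hyperplane: "transverse_at \<Sigma> \<Delta> w" "\<Union>\<Delta> = {x. x $ l = a}"
    for w :: "real^'n" and \<Sigma> \<Delta>
  proof -
    obtain \<sigma> where "\<sigma> \<in> \<Sigma>" "w \<in> \<sigma>" "w $ l = a" "\<not> span_diff \<sigma> \<subseteq> {x. x $ l = 0}"
      using transverse_at_hyperplane[OF hyperplane] by blast
    then show ?thesis
      using cell complex by blast
  qed
  show ?thesis
    by (intro conjI allI impI; (elim conjE exE)?) (rule inclusion cell transverse; assumption)+
qed

end
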